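(* Fix a leader policy $\pi$, let $\nu^\pi$ be its quantal response under the true model, let $\tilde\nu=\{\tilde\nu_h(\cdot\mid s)\in\Delta(\mathcal B)\}$ be any follower policy, and let $\tilde U_h:\mathcal S\times\mathcal A\times\mathcal B\to\mathbb R$, $\tilde W_h:\mathcal S\to\mathbb R$ ($h\in[H]$) be arbitrary functions with $\|\tilde U_h\|_\infty\le H$, and set $\tilde U_{H+1}=0$, $\tilde W_{H+1}=0$. Then $$\mathbb E_{s_1\sim\rho_0}\bigl[(T_1^{\pi,\tilde\nu}\tilde U_1)(s_1)\bigr]-J(\pi)\le\sum_{h=1}^H\mathbb E\bigl[(\tilde U_h-u_h)(s_h,a_h,b_h)-(T_{h+1}^{\pi,\tilde\nu}\tilde U_{h+1})(s_{h+1})\bigr]+\sum_{h=1}^H H\,\mathbb E\bigl[\|\tilde\nu_h(\cdot\mid s_h)-\nu_h^\pi(\cdot\mid s_h)\|_1\bigr],$$ and $$\mathbb E_{s_1\sim\rho_0}\bigl[\tilde W_1(s_1)\bigr]-J(\pi)\le\sum_{h=1}^H\mathbb E\bigl[(\tilde U_h-u_h)(s_h,a_h,b_h)-\tilde W_{h+1}(s_{h+1})\bigr]+\sum_{h=1}^H\mathbb E\bigl[\tilde W_h(s_h)-(T_h^{\pi,\tilde\nu}\tilde U_h)(s_h)\bigr]+\sum_{h=1}^H H\,\mathbb E\bigl[\|\tilde\nu_h(\cdot\mid s_h)-\nu_h^\pi(\cdot\mid s_h)\|_1\bigr],$$ where $\mathbb E$ is over a trajectory generated by $(\pi,\nu^\pi)$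 on the true model.
   Context: Episodic leader–follower Markov game (true model): state space $\mathcal S$, action sets $\mathcal A$ (leader), $\mathcal B$ (follower), horizon $H$, initial distribution $\rho_0$, transitions $P_h(\cdot\mid s,a,b)$, leader rewards $u_h\in[0,1]$, follower rewards $r_h\in[0,1]$. Leader policy: $\pi_h(\cdot\mid s,b)\in\Delta(\mathcal A)$; follower policy $\nu_h(\cdot\mid s)\in\Delta(\mathcal B)$; at step $h$, $b_h\sim\nu_h(\cdot\mid s_h)$, $a_h\sim\pi_h(\cdot\mid s_h,b_h)$, $s_{h+1}\sim P_h(\cdot\mid s_h,a_h,b_h)$. With $\eta>0,\gamma\in[0,1]$, the quantal response $\nu^\pi$ is defined by backward recursion: $V_{H+1}^\pi=0$, $Q_h^\pi(s,b)=\sum_a\pi_h(a\mid s,b)\bigl(r_h(s,a,b)+\gamma\mathbb E_{s'\sim P_h(\cdot\mid s,a,b)}V_{h+1}^\pi(s')\bigr)$, $V_h^\pi(s)=\eta^{-1}\log\sum_b e^{\eta Q_h^\pi(s,b)}$, $\nu_h^\pi(b\mid s)=\exp(\eta(Q_h^\pi(s,b)-V_h^\pi(s)))$. Leader values: $W_{H+1}^\pi=0$, $U_h^\pi=u_h+P_hW_{h+1}^\pi$, $W_h^\pi=T_h^{\pi,\nu^\pi}U_h^\pi$, $J(\pi)=\mathbb E_{s_1\sim\rho_0}W_1^\pi(s_1)$, where for a follower policy $\nu$ the operator is $(T_h^{\pi,\nu}f)(s)=\sum_{a,b}f(s,a,b)\pi_h(a\mid s,b)\nu_h(b\mid s)$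 (and $T_{H+1}^{\pi,\nu}\tilde U_{H+1}=0$). *)

theory Defs
  imports Complex_Main
begin

text \<open>Conventions:
  rho0 s : initial distribution; P h s a b s' : transition probability;
  u h s a b / r h s a b : leader / follower rewards;
  lp h s b a = pi_h(a | s,b) : leader policy; nu h s b = nu_h(b | s) : follower policy.\<close>

definition is_dist :: "('x::finite \<Rightarrow> real) \<Rightarrow> bool" where
  "is_dist p \<longleftrightarrow> (\<forall>x. 0 \<le> p x) \<and> (\<Sum>x\<in>UNIV. p x) = 1"

definition Top :: "(nat \<Rightarrow> 's \<Rightarrow> 'b \<Rightarrow> 'a::finite \<Rightarrow> real) \<Rightarrow> (nat \<Rightarrow> 's \<Rightarrow> 'b::finite \<Rightarrow> real)
    \<Rightarrow> nat \<Rightarrow> ('s \<Rightarrow> 'a \<Rightarrow> 'b \<Rightarrow> real) \<Rightarrow> 's \<Rightarrow> real" where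
  "Top lp nu h f s = (\<Sum>a\<in>UNIV. \<Sum>b\<in>UNIV. f s a b * lp h s b a * nu h s b)"

definition Qstep :: "real \<Rightarrow> (nat \<Rightarrow> 's \<Rightarrow> 'a \<Rightarrow> 'b \<Rightarrow> real) \<Rightarrow> (nat \<Rightarrow> 's \<Rightarrow> 'a \<Rightarrow> 'b \<Rightarrow> 's::finite \<Rightarrow> real)
    \<Rightarrow> (nat \<Rightarrow> 's \<Rightarrow> 'b \<Rightarrow> 'a::finite \<Rightarrow> real) \<Rightarrow> ('s \<Rightarrow> real) \<Rightarrow> nat \<Rightarrow> 's \<Rightarrow> 'b \<Rightarrow> real" where
  "Qstep gamma r P lp Vnext h s b =
     (\<Sum>a\<in>UNIV. lp h s b a * (r h s a b + gamma * (\<Sum>s'\<in>UNIV. P h s a b s' * Vnext s')))"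

text \<open>qrVaux ... n is V_{H+1-n}^lp (backward recursion indexed by steps remaining).\<close>
fun qrVaux :: "real \<Rightarrow> real \<Rightarrow> nat \<Rightarrow> (nat \<Rightarrow> 's \<Rightarrow> 'a \<Rightarrow> 'b \<Rightarrow> real)
    \<Rightarrow> (nat \<Rightarrow> 's \<Rightarrow> 'a \<Rightarrow> 'b \<Rightarrow> 's::finite \<Rightarrow> real) \<Rightarrow> (nat \<Rightarrow> 's \<Rightarrow> 'b::finite \<Rightarrow> 'a::finite \<Rightarrow> real)
    \<Rightarrow> nat \<Rightarrow> 's \<Rightarrow> real" where
  "qrVaux eta gamma H r P lp 0 s = 0"
| "qrVaux eta gamma H r P lp (Suc n) s =
     ln (\<Sum>b\<in>UNIV. exp (eta * Qstep gamma r P lp (qrVaux eta gamma H r P lp n) (H - n) s b)) / eta"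

text \<open>V_h^lp (for 1 \<le> h \<le> H+1; V_{H+1} = 0).\<close>
definition qrV where
  "qrV eta gamma H r P lp h = qrVaux eta gamma H r P lp (Suc H - h)"

definition qrQ where
  "qrQ eta gamma H r P lp h s b = Qstep gamma r P lp (qrV eta gamma H r P lp (Suc h)) h s b"

definition qrNu where
  "qrNu eta gamma H r P lp h s b =
     exp (eta * (qrQ eta gamma H r P lp h s b - qrV eta gamma H r P lp h s))"

text \<open>Leader value W_{H+1-n}^lp, with U_h = u_h + P_h W_{h+1}, W_h = T_h^{lp,nu^lp} U_h.\<close>
fun leadWaux :: "real \<Rightarrow> real \<Rightarrow> nat \<Rightarrow> (nat \<Rightarrow> 's \<Rightarrow> 'a \<Rightarrow> 'b \<Rightarrow> real) \<Rightarrow> (nat \<Rightarrow> 's \<Rightarrow> 'a \<Rightarrow> 'b \<Rightarrow> real)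
    \<Rightarrow> (nat \<Rightarrow> 's \<Rightarrow> 'a \<Rightarrow> 'b \<Rightarrow> 's::finite \<Rightarrow> real) \<Rightarrow> (nat \<Rightarrow> 's \<Rightarrow> 'b::finite \<Rightarrow> 'a::finite \<Rightarrow> real)
    \<Rightarrow> nat \<Rightarrow> 's \<Rightarrow> real" where
  "leadWaux eta gamma H u r P lp 0 s = 0"
| "leadWaux eta gamma H u r P lp (Suc n) s =
     Top lp (qrNu eta gamma H r P lp) (H - n)
       (\<lambda>s a b. u (H - n) s a b + (\<Sum>s'\<in>UNIV. P (H - n) s a b s' * leadWaux eta gamma H u r P lp n s')) s"

definition leadW where
  "leadW eta gamma H u r P lp h = leadWaux eta gamma H u r P lp (Suc H - h)"

definition Jval where
  "Jval eta gamma H rho0 u r P lp = (\<Sum>s\<in>UNIV. rho0 s * leadW eta gamma H u r P lp 1 s)"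

text \<open>stmarg rho0 P lp nu k s = Pr[s_{k+1} = s] along a trajectory generated by (lp, nu).\<close>
fun stmarg :: "('s::finite \<Rightarrow> real) \<Rightarrow> (nat \<Rightarrow> 's \<Rightarrow> 'a \<Rightarrow> 'b \<Rightarrow> 's \<Rightarrow> real)
    \<Rightarrow> (nat \<Rightarrow> 's \<Rightarrow> 'b::finite \<Rightarrow> 'a::finite \<Rightarrow> real) \<Rightarrow> (nat \<Rightarrow> 's \<Rightarrow> 'b \<Rightarrow> real) \<Rightarrow> nat \<Rightarrow> 's \<Rightarrow> real" where
  "stmarg rho0 P lp nu 0 s = rho0 s"
| "stmarg rho0 P lp nu (Suc k) s' =
     (\<Sum>s\<in>UNIV. \<Sum>a\<in>UNIV. \<Sum>b\<in>UNIV.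
        stmarg rho0 P lp nu k s * nu (Suc k) s b * lp (Suc k) s b a * P (Suc k) s a b s')"

definition stdist where
  "stdist rho0 P lp nu h = stmarg rho0 P lp nu (h - 1)"

text \<open>E[ F(s_h, a_h, b_h, s_{h+1}) ] along a trajectory generated by (lp, nu).\<close>
definition Etraj :: "('s::finite \<Rightarrow> real) \<Rightarrow> (nat \<Rightarrow> 's \<Rightarrow> 'a \<Rightarrow> 'b \<Rightarrow> 's \<Rightarrow> real)
    \<Rightarrow> (nat \<Rightarrow> 's \<Rightarrow> 'b::finite \<Rightarrow> 'a::finite \<Rightarrow> real) \<Rightarrow> (nat \<Rightarrow> 's \<Rightarrow> 'b \<Rightarrow> real) \<Rightarrow> nat
    \<Rightarrow> ('s \<Rightarrow> 'a \<Rightarrow> 'b \<Rightarrow> 's \<Rightarrow> real) \<Rightarrow> real" where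
  "Etraj rho0 P lp nu h F =
     (\<Sum>s\<in>UNIV. \<Sum>a\<in>UNIV. \<Sum>b\<in>UNIV. \<Sum>s'\<in>UNIV.
        stdist rho0 P lp nu h s * nu h s b * lp h s b a * P h s a b s' * F s a b s')"

end

theory Submission
  imports Defs
begin

(* Along a trajectory of (pi, nu^pi) the leader value obeys the Bellman identity
   E[W_h(s_h)] = E[u_h(s_h,a_h,b_h)] + E[W_{h+1}(s_{h+1})], since nu^pi is the follower policy inside W_h.
   Replacing nu^pi by nu~ in T_h moves (T_h U~_h)(s) by at most H ||nu~_h(.|s) - nu^pi_h(.|s)||_1, because
   |U~_h| <= H.  Together they bound the gap E[(T_h^{pi,nu~} U~_h)(s_h)] - E[W_h(s_h)] by the h-th summand
   plus the gap at h+1, where any function V of s_{h+1} may stand in for T_{h+1} U~_{h+1}.  Summing over h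
   telescopes: the gap vanishes at H+1 and is the left-hand side at h = 1.  For W~ one adds and subtracts
   E[(T_h U~_h)(s_h)] and takes V = W~_{h+1}. *)

definition Estate :: "('s::finite \<Rightarrow> real) \<Rightarrow> (nat \<Rightarrow> 's \<Rightarrow> 'a \<Rightarrow> 'b \<Rightarrow> 's \<Rightarrow> real)
    \<Rightarrow> (nat \<Rightarrow> 's \<Rightarrow> 'b::finite \<Rightarrow> 'a::finite \<Rightarrow> real) \<Rightarrow> (nat \<Rightarrow> 's \<Rightarrow> 'b \<Rightarrow> real) \<Rightarrow> nat
    \<Rightarrow> ('s \<Rightarrow> real) \<Rightarrow> real" where
  "Estate rho0 P lp nu h g = (\<Sum>s\<in>UNIV. stdist rho0 P lp nu h s * g s)"

lemma Estate_1: "Estate rho0 P lp nu 1 g = (\<Sum>s\<in>UNIV. rho0 s * g s)"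
  by (simp add: Estate_def stdist_def)

lemma Estate_diff:
  "Estate rho0 P lp nu h (\<lambda>s. f s - g s) = Estate rho0 P lp nu h f - Estate rho0 P lp nu h g"
  by (simp add: Estate_def right_diff_distrib sum_subtractf)

lemma Estate_mono:
  assumes "\<And>s. 0 \<le> stdist rho0 P lp nu h s" and "\<And>s. f s \<le> g s"
  shows "Estate rho0 P lp nu h f \<le> Estate rho0 P lp nu h g"
  unfolding Estate_def by (rule sum_mono) (simp add: assms mult_left_mono)

lemma stmarg_nonneg:
  assumes "\<And>s. 0 \<le> rho0 s"
    and "\<And>k s a b s'. k \<in> {1..n} \<Longrightarrow> 0 \<le> nu k s b \<and> 0 \<le> lp k s b a \<and> 0 \<le> P k s a b s'"
  shows "0 \<le> stmarg rho0 P lp nu n s"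
  using assms(2)
proof (induction n arbitrary: s)
  case 0
  then show ?case by (simp add: assms(1))
next
  case (Suc n)
  then show ?case by (auto intro!: sum_nonneg mult_nonneg_nonneg)
qed

lemma Etraj_add:
  "Etraj rho0 P lp nu h (\<lambda>s a b s'. F s a b s' + G s a b s')
     = Etraj rho0 P lp nu h F + Etraj rho0 P lp nu h G"
  by (simp add: Etraj_def distrib_left sum.distrib)

lemma Etraj_diff:
  "Etraj rho0 P lp nu h (\<lambda>s a b s'. F s a b s' - G s a b s')
     = Etraj rho0 P lp nu h F - Etraj rho0 P lp nu h G"
  by (simp add: Etraj_def right_diff_distrib sum_subtractf)

lemma Etraj_eq_Estate_Top:
  "Etraj rho0 P lp nu h F
     = Estate rho0 P lp nu h (Top lp nu h (\<lambda>s a b. \<Sum>s'\<in>UNIV. P h s a b s' * F s a b s'))"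
  by (simp add: Etraj_def Estate_def Top_def sum_distrib_left sum_distrib_right mult_ac)

lemma Etraj_state_action:
  assumes "\<And>s a b. (\<Sum>s'\<in>UNIV. P h s a b s') = 1"
  shows "Etraj rho0 P lp nu h (\<lambda>s a b s'. f s a b) = Estate rho0 P lp nu h (Top lp nu h f)"
  by (simp add: Etraj_eq_Estate_Top assms flip: sum_distrib_right)

lemma Top_const:
  assumes "\<And>b. (\<Sum>a\<in>UNIV. lp h s b a) = 1" and "(\<Sum>b\<in>UNIV. nu h s b) = 1"
  shows "Top lp nu h (\<lambda>s a b. c s) s = c s"
proof -
  have "Top lp nu h (\<lambda>s a b. c s) s = c s * (\<Sum>b\<in>UNIV. nu h s b * (\<Sum>a\<in>UNIV. lp h s b a))"
    unfolding Top_def by (subst sum.swap) (simp add: sum_distrib_left sum_distrib_right mult_ac)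
  then show ?thesis using assms by simp
qed

lemma Etraj_state:
  assumes "\<And>s a b. (\<Sum>s'\<in>UNIV. P h s a b s') = 1"
    and "\<And>s b. (\<Sum>a\<in>UNIV. lp h s b a) = 1" and "\<And>s. (\<Sum>b\<in>UNIV. nu h s b) = 1"
  shows "Etraj rho0 P lp nu h (\<lambda>s a b s'. g s) = Estate rho0 P lp nu h g"
proof -
  have "Top lp nu h (\<lambda>s a b. g s) = g"
    by (rule ext, rule Top_const) (simp_all add: assms(2,3))
  then show ?thesis by (simp add: Etraj_state_action assms(1))
qed

lemma Etraj_next_state:
  assumes "1 \<le> h"
  shows "Etraj rho0 P lp nu h (\<lambda>s a b s'. g s') = Estate rho0 P lp nu (Suc h) g"
proof -
  obtain k where h: "h = Suc k" using assms by (cases h) auto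
  have "Etraj rho0 P lp nu h (\<lambda>s a b s'. g s') =
      (\<Sum>s'\<in>UNIV. \<Sum>s\<in>UNIV. \<Sum>a\<in>UNIV. \<Sum>b\<in>UNIV.
         stmarg rho0 P lp nu k s * nu h s b * lp h s b a * P h s a b s' * g s')"
    unfolding Etraj_def stdist_def h
    by (subst (3) sum.swap, subst (2) sum.swap, subst sum.swap) (simp add: mult.assoc)
  also have "\<dots> = Estate rho0 P lp nu (Suc h) g"
    unfolding Estate_def stdist_def h by (simp add: sum_distrib_right)
  finally show ?thesis .
qed

lemma Top_diff_le:
  assumes "\<And>b. is_dist (lp h s b)" and "\<And>a b. \<bar>f s a b\<bar> \<le> c"
  shows "Top lp nu h f s - Top lp nu' h f s \<le> c * (\<Sum>b\<in>UNIV. \<bar>nu h s b - nu' h s b\<bar>)"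
proof -
  let ?F = "\<lambda>b. \<Sum>a\<in>UNIV. f s a b * lp h s b a"
  have F_bound: "\<bar>?F b\<bar> \<le> c" for b
  proof -
    have "\<bar>?F b\<bar> \<le> (\<Sum>a\<in>UNIV. \<bar>f s a b * lp h s b a\<bar>)"
      by (rule sum_abs)
    also have "\<dots> \<le> (\<Sum>a\<in>UNIV. c * lp h s b a)"
      using assms unfolding is_dist_def by (intro sum_mono) (simp add: abs_mult mult_right_mono)
    also have "\<dots> = c"
      using assms(1) by (simp add: is_dist_def flip: sum_distrib_left)
    finally show ?thesis .
  qed
  have "Top lp nu h f s - Top lp nu' h f s = (\<Sum>b\<in>UNIV. (nu h s b - nu' h s b) * ?F b)"
    unfolding Top_def
    by (subst (1 2) sum.swap)
      (simp add: sum_distrib_left mult_ac right_diff_distrib flip: sum_subtractf)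
  also have "\<dots> \<le> (\<Sum>b\<in>UNIV. \<bar>nu h s b - nu' h s b\<bar> * c)"
  proof (rule sum_mono)
    fix b
    have "(nu h s b - nu' h s b) * ?F b \<le> \<bar>nu h s b - nu' h s b\<bar> * \<bar>?F b\<bar>"
      by (simp flip: abs_mult)
    then show "(nu h s b - nu' h s b) * ?F b \<le> \<bar>nu h s b - nu' h s b\<bar> * c"
      using F_bound[of b] by (meson abs_ge_zero mult_left_mono order.trans)
  qed
  finally show ?thesis by (simp add: sum_distrib_left mult_ac)
qed

lemma Estate_Top_le:
  assumes "\<And>s. 0 \<le> stdist rho0 P lp nu h s"
    and "\<And>s a b. (\<Sum>s'\<in>UNIV. P h s a b s') = 1"
    and "\<And>s b. is_dist (lp h s b)" and "\<And>s. (\<Sum>b\<in>UNIV. nu h s b) = 1"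
    and "\<And>s a b. \<bar>f s a b\<bar> \<le> c"
  shows "Estate rho0 P lp nu h (Top lp nu' h f)
    \<le> Etraj rho0 P lp nu h (\<lambda>s a b s'. f s a b)
      + c * Etraj rho0 P lp nu h (\<lambda>s a b s'. \<Sum>b'\<in>UNIV. \<bar>nu' h s b' - nu h s b'\<bar>)"
proof -
  have lp_sum: "\<And>s b. (\<Sum>a\<in>UNIV. lp h s b a) = 1"
    using assms(3) by (simp add: is_dist_def)
  have "Estate rho0 P lp nu h (Top lp nu' h f)
    \<le> Estate rho0 P lp nu h (\<lambda>s. Top lp nu h f s + c * (\<Sum>b'\<in>UNIV. \<bar>nu' h s b' - nu h s b'\<bar>))"
  proof (rule Estate_mono[OF assms(1)])
    fix s
    have "Top lp nu' h f s - Top lp nu h f s \<le> c * (\<Sum>b'\<in>UNIV. \<bar>nu' h s b' - nu h s b'\<bar>)"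
      by (rule Top_diff_le) (simp_all add: assms(3,5))
    then show "Top lp nu' h f s \<le> Top lp nu h f s + c * (\<Sum>b'\<in>UNIV. \<bar>nu' h s b' - nu h s b'\<bar>)"
      by simp
  qed
  also have "\<dots> = Etraj rho0 P lp nu h (\<lambda>s a b s'. f s a b)
      + c * Etraj rho0 P lp nu h (\<lambda>s a b s'. \<Sum>b'\<in>UNIV. \<bar>nu' h s b' - nu h s b'\<bar>)"
    unfolding Etraj_state[where P = P and h = h and lp = lp and nu = nu, OF assms(2) lp_sum assms(4)]
    unfolding Etraj_state_action[where P = P and h = h, OF assms(2)]
    by (simp add: Estate_def sum.distrib sum_distrib_left algebra_simps)
  finally show ?thesis .
qed

lemma qrV_recursion:
  assumes "1 \<le> h" "h \<le> H"
  shows "qrV eta gamma H r P lp h s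
    = ln (\<Sum>b\<in>UNIV. exp (eta * qrQ eta gamma H r P lp h s b)) / eta"
proof -
  have "Suc H - h = Suc (H - h)" "H - (H - h) = h" "Suc H - Suc h = H - h"
    using assms by auto
  then show ?thesis unfolding qrV_def qrQ_def by simp
qed

lemma is_dist_qrNu:
  assumes "1 \<le> h" "h \<le> H" "eta \<noteq> 0"
  shows "is_dist (qrNu eta gamma H r P lp h s)"
proof -
  define S where "S = (\<Sum>b\<in>UNIV. exp (eta * qrQ eta gamma H r P lp h s b))"
  have "S > 0" unfolding S_def by (rule sum_pos) auto
  have "eta * qrV eta gamma H r P lp h s = ln S"
    by (simp add: qrV_recursion[OF assms(1,2)] S_def assms(3))
  then have "exp (eta * qrV eta gamma H r P lp h s) = S"
    using \<open>S > 0\<close> by simp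
  then have "(\<Sum>b\<in>UNIV. qrNu eta gamma H r P lp h s b) = S / S"
    by (simp add: qrNu_def S_def right_diff_distrib exp_diff flip: sum_divide_distrib)
  with \<open>S > 0\<close> show ?thesis by (simp add: is_dist_def qrNu_def)
qed

lemma leadW_recursion:
  assumes "1 \<le> h" "h \<le> H"
  shows "leadW eta gamma H u r P lp h = Top lp (qrNu eta gamma H r P lp) h
     (\<lambda>s a b. u h s a b + (\<Sum>s'\<in>UNIV. P h s a b s' * leadW eta gamma H u r P lp (Suc h) s'))"
proof -
  have "Suc H - h = Suc (H - h)" "H - (H - h) = h" "Suc H - Suc h = H - h"
    using assms by auto
  then show ?thesis unfolding leadW_def by (simp add: fun_eq_iff)
qed

lemma Estate_leadW_recursion:
  assumes "1 \<le> h" "h \<le> H" and "\<And>s a b. (\<Sum>s'\<in>UNIV. P h s a b s') = 1"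
  shows "Estate rho0 P lp (qrNu eta gamma H r P lp) h (leadW eta gamma H u r P lp h)
    = Etraj rho0 P lp (qrNu eta gamma H r P lp) h (\<lambda>s a b s'. u h s a b)
      + Estate rho0 P lp (qrNu eta gamma H r P lp) (Suc h) (leadW eta gamma H u r P lp (Suc h))"
proof -
  let ?nu = "qrNu eta gamma H r P lp"
  let ?W = "leadW eta gamma H u r P lp (Suc h)"
  have "Etraj rho0 P lp ?nu h (\<lambda>s a b s'. u h s a b) + Estate rho0 P lp ?nu (Suc h) ?W
      = Etraj rho0 P lp ?nu h (\<lambda>s a b s'. u h s a b + ?W s')"
    using Etraj_next_state[OF assms(1), of rho0 P lp ?nu ?W] by (simp add: Etraj_add)
  also have "\<dots> = Estate rho0 P lp ?nu h (leadW eta gamma H u r P lp h)"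
    by (simp add: Etraj_eq_Estate_Top leadW_recursion[OF assms(1,2)]
        distrib_left sum.distrib assms(3) flip: sum_distrib_right)
  finally show ?thesis by simp
qed

lemma value_gap_step_le:
  fixes eta gamma :: real and H :: nat
    and P :: "nat \<Rightarrow> 's::finite \<Rightarrow> 'a::finite \<Rightarrow> 'b::finite \<Rightarrow> 's \<Rightarrow> real"
    and u r :: "nat \<Rightarrow> 's \<Rightarrow> 'a \<Rightarrow> 'b \<Rightarrow> real" and lp :: "nat \<Rightarrow> 's \<Rightarrow> 'b \<Rightarrow> 'a \<Rightarrow> real"
  defines "nu \<equiv> qrNu eta gamma H r P lp" and "W \<equiv> leadW eta gamma H u r P lp"
  assumes h: "1 \<le> h" "h \<le> H" and eta: "eta \<noteq> 0"
    and d_nonneg: "\<And>s. 0 \<le> stdist rho0 P lp nu h s"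
    and P_sum: "\<And>s a b. (\<Sum>s'\<in>UNIV. P h s a b s') = 1"
    and lp: "\<And>s b. is_dist (lp h s b)"
    and f_bound: "\<And>s a b. \<bar>f s a b\<bar> \<le> c"
  shows "Estate rho0 P lp nu h (Top lp nu' h f) - Estate rho0 P lp nu h (W h)
    \<le> Etraj rho0 P lp nu h (\<lambda>s a b s'. f s a b - u h s a b - V s')
      + c * Etraj rho0 P lp nu h (\<lambda>s a b s'. \<Sum>b'\<in>UNIV. \<bar>nu' h s b' - nu h s b'\<bar>)
      + (Estate rho0 P lp nu (Suc h) V - Estate rho0 P lp nu (Suc h) (W (Suc h)))"
proof -
  have "\<And>s. (\<Sum>b\<in>UNIV. nu h s b) = 1"
    using is_dist_qrNu[OF h eta, where gamma = gamma and r = r and P = P and lp = lp]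
    by (simp add: nu_def is_dist_def)
  then have "Estate rho0 P lp nu h (Top lp nu' h f)
    \<le> Etraj rho0 P lp nu h (\<lambda>s a b s'. f s a b)
      + c * Etraj rho0 P lp nu h (\<lambda>s a b s'. \<Sum>b'\<in>UNIV. \<bar>nu' h s b' - nu h s b'\<bar>)"
    by (intro Estate_Top_le d_nonneg P_sum lp f_bound)
  moreover have "Estate rho0 P lp nu h (W h)
    = Etraj rho0 P lp nu h (\<lambda>s a b s'. u h s a b) + Estate rho0 P lp nu (Suc h) (W (Suc h))"
    unfolding nu_def W_def using h P_sum by (rule Estate_leadW_recursion)
  ultimately show ?thesis
    using h by (simp add: Etraj_diff Etraj_next_state)
qed

lemma sum_telescope_le:
  fixes X Y :: "nat \<Rightarrow> real"
  assumes "\<And>h. h \<in> {1..n} \<Longrightarrow> X h - X (Suc h) \<le> Y h"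
  shows "X 1 - X (Suc n) \<le> (\<Sum>h=1..n. Y h)"
proof -
  have "X 1 - X (Suc n) = (\<Sum>h=1..n. X h - X (Suc h))"
    using sum_Suc_diff[of 1 n "\<lambda>h. - X h"] by simp
  also have "\<dots> \<le> (\<Sum>h=1..n. Y h)"
    by (rule sum_mono) (rule assms)
  finally show ?thesis .
qed

theorem mainTheorem3:
  fixes H :: nat and eta gamma :: real
    and rho0 :: "'s::finite \<Rightarrow> real"
    and P :: "nat \<Rightarrow> 's \<Rightarrow> 'a::finite \<Rightarrow> 'b::finite \<Rightarrow> 's \<Rightarrow> real"
    and u r :: "nat \<Rightarrow> 's \<Rightarrow> 'a \<Rightarrow> 'b \<Rightarrow> real"
    and lp :: "nat \<Rightarrow> 's \<Rightarrow> 'b \<Rightarrow> 'a \<Rightarrow> real"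
    and nut :: "nat \<Rightarrow> 's \<Rightarrow> 'b \<Rightarrow> real"
    and Ut :: "nat \<Rightarrow> 's \<Rightarrow> 'a \<Rightarrow> 'b \<Rightarrow> real"
    and Wt :: "nat \<Rightarrow> 's \<Rightarrow> real"
  assumes eta: "eta > 0" and gamma: "0 \<le> gamma" "gamma \<le> 1"
    and rho0: "is_dist rho0"
    and P: "\<And>h s a b. h \<in> {1..H} \<Longrightarrow> is_dist (P h s a b)"
    and u: "\<And>h s a b. h \<in> {1..H} \<Longrightarrow> 0 \<le> u h s a b \<and> u h s a b \<le> 1"
    and r: "\<And>h s a b. h \<in> {1..H} \<Longrightarrow> 0 \<le> r h s a b \<and> r h s a b \<le> 1"
    and lp: "\<And>h s b. h \<in> {1..H} \<Longrightarrow> is_dist (lp h s b)"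
    and nut: "\<And>h s. h \<in> {1..H} \<Longrightarrow> is_dist (nut h s)"
    and Ut_bd: "\<And>h s a b. h \<in> {1..H} \<Longrightarrow> \<bar>Ut h s a b\<bar> \<le> real H"
    and Ut_end: "Ut (Suc H) = (\<lambda>s a b. 0)"
    and Wt_end: "Wt (Suc H) = (\<lambda>s. 0)"
  defines "nuq \<equiv> qrNu eta gamma H r P lp"
  shows
   "((\<Sum>s\<in>UNIV. rho0 s * Top lp nut 1 (Ut 1) s) - Jval eta gamma H rho0 u r P lp
      \<le> (\<Sum>h=1..H. Etraj rho0 P lp nuq h
            (\<lambda>s a b s'. (Ut h s a b - u h s a b) - Top lp nut (Suc h) (Ut (Suc h)) s'))
        + (\<Sum>h=1..H. real H * Etraj rho0 P lp nuq h
            (\<lambda>s a b s'. \<Sum>b'\<in>UNIV. \<bar>nut h s b' - nuq h s b'\<bar>))) \<and>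
    ((\<Sum>s\<in>UNIV. rho0 s * Wt 1 s) - Jval eta gamma H rho0 u r P lp
      \<le> (\<Sum>h=1..H. Etraj rho0 P lp nuq h
            (\<lambda>s a b s'. (Ut h s a b - u h s a b) - Wt (Suc h) s'))
        + (\<Sum>h=1..H. Etraj rho0 P lp nuq h
            (\<lambda>s a b s'. Wt h s - Top lp nut h (Ut h) s))
        + (\<Sum>h=1..H. real H * Etraj rho0 P lp nuq h
            (\<lambda>s a b s'. \<Sum>b'\<in>UNIV. \<bar>nut h s b' - nuq h s b'\<bar>)))"
proof -
  let ?E = "Estate rho0 P lp nuq" and ?W = "leadW eta gamma H u r P lp"
  let ?D = "\<lambda>h. Etraj rho0 P lp nuq h (\<lambda>s a b s'. \<Sum>b'\<in>UNIV. \<bar>nut h s b' - nuq h s b'\<bar>)"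
  have P_sum: "\<And>s a b. (\<Sum>s'\<in>UNIV. P h s a b s') = 1" if "h \<in> {1..H}" for h
    using P[OF that] by (simp add: is_dist_def)
  have gap_step: "?E h (Top lp nut h (Ut h)) - ?E h (?W h)
      \<le> Etraj rho0 P lp nuq h (\<lambda>s a b s'. Ut h s a b - u h s a b - V (Suc h) s') + real H * ?D h
        + (?E (Suc h) (V (Suc h)) - ?E (Suc h) (?W (Suc h)))" if h: "h \<in> {1..H}" for h V
  proof -
    have "0 \<le> stdist rho0 P lp nuq h s" for s
      unfolding stdist_def nuq_def
      by (rule stmarg_nonneg) (use rho0 lp P h in \<open>auto simp: is_dist_def qrNu_def\<close>)
    with h show ?thesis
      unfolding nuq_def by (intro value_gap_step_le) (use eta P_sum lp Ut_bd in auto)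
  qed
  have Etraj_Wt: "Etraj rho0 P lp nuq h (\<lambda>s a b s'. Wt h s - Top lp nut h (Ut h) s)
      = ?E h (Wt h) - ?E h (Top lp nut h (Ut h))" if h: "h \<in> {1..H}" for h
    using h lp is_dist_qrNu[of h H eta gamma r P lp] eta
    by (simp add: Etraj_state P_sum is_dist_def nuq_def Estate_diff)
  let ?X1 = "\<lambda>h. ?E h (Top lp nut h (Ut h)) - ?E h (?W h)"
  let ?X2 = "\<lambda>h. ?E h (Wt h) - ?E h (?W h)"
  have "?X1 1 - ?X1 (Suc H) \<le> (\<Sum>h=1..H. Etraj rho0 P lp nuq h
      (\<lambda>s a b s'. Ut h s a b - u h s a b - Top lp nut (Suc h) (Ut (Suc h)) s') + real H * ?D h)"
    by (rule sum_telescope_le, drule gap_step[of _ "\<lambda>h. Top lp nut h (Ut h)"]) linarith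
  moreover have "?X2 1 - ?X2 (Suc H) \<le> (\<Sum>h=1..H.
      Etraj rho0 P lp nuq h (\<lambda>s a b s'. Ut h s a b - u h s a b - Wt (Suc h) s')
      + Etraj rho0 P lp nuq h (\<lambda>s a b s'. Wt h s - Top lp nut h (Ut h) s) + real H * ?D h)"
    by (rule sum_telescope_le, frule gap_step[of _ Wt], drule Etraj_Wt) linarith
  moreover have "?E 1 g = (\<Sum>s\<in>UNIV. rho0 s * g s)" for g
    by (rule Estate_1)
  moreover have "Jval eta gamma H rho0 u r P lp = ?E 1 (?W 1)"
    unfolding Jval_def Estate_1 ..
  moreover have "?E (Suc H) (Top lp nut (Suc H) (Ut (Suc H))) = 0"
    and "?E (Suc H) (Wt (Suc H)) = 0" and "?E (Suc H) (?W (Suc H)) = 0"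
    by (simp_all add: Estate_def Top_def Ut_end Wt_end leadW_def)
  ultimately show ?thesis
    by (simp add: sum.distrib)
qed

end
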